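(* Let $H[A,B]$ be a connected bipartite cubic graph with a $2$-cut $C$, and let $H_1,H_2$ be its marked $C$-components. For $a\in A$ and $b\in B$, the pair $(a,b)$ is $\lambda$-matchable in $H$ if and only if $a$ and $b$ lie in the same component of $H-C$ and $(a,b)$ is $\lambda$-matchable in the corresponding marked $C$-component. Consequently, $\rho(H)=\rho(H_1)+\rho(H_2)$.
   Context: Graphs are loopless but may have parallel edges. A $2$-cut is a cut (set of edges with exactly one end in a vertex set $X$) with two edges. For a $2$-cut $C$ of a $2$-connected cubic graph, $G-C$ has two components; adding to each an edge (the marker edge) joining its two vertices of degree two gives the two marked $C$-components. For a connected bipartite cubic graph, $a\in A$, $b\in B$, an $(a,b)$-matching is a spanning subgraph with $a,b$ of degree $3$ and every other vertex of degree $1$; $(a,b)$ is $\lambda$-matchable if one exists; $\rho$ counts such pairs. *)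

theory Defs
  imports Main
begin

text \<open>Multigraphs (parallel edges allowed, no loops): vertex set V, edge set E of edge
  identifiers, and an endpoint map ends assigning each edge a 2-element set of vertices.\<close>

definition mgraph :: "'v set \<Rightarrow> 'e set \<Rightarrow> ('e \<Rightarrow> 'v set) \<Rightarrow> bool" where
  "mgraph V E ends \<longleftrightarrow> finite V \<and> finite E \<and> (\<forall>e\<in>E. ends e \<subseteq> V \<and> card (ends e) = 2)"

definition deg :: "'e set \<Rightarrow> ('e \<Rightarrow> 'v set) \<Rightarrow> 'v \<Rightarrow> nat" where
  "deg F ends v = card {e\<in>F. v \<in> ends e}"

definition cubic :: "'v set \<Rightarrow> 'e set \<Rightarrow> ('e \<Rightarrow> 'v set) \<Rightarrow> bool" where
  "cubic V E ends \<longleftrightarrow> (\<forall>v\<in>V. deg E ends v = 3)"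

definition adj_rel :: "'e set \<Rightarrow> ('e \<Rightarrow> 'v set) \<Rightarrow> ('v \<times> 'v) set" where
  "adj_rel F ends = {(u, w). \<exists>e\<in>F. ends e = {u, w}}"

definition connected_mg :: "'v set \<Rightarrow> 'e set \<Rightarrow> ('e \<Rightarrow> 'v set) \<Rightarrow> bool" where
  "connected_mg V E ends \<longleftrightarrow> (\<forall>u\<in>V. \<forall>w\<in>V. (u, w) \<in> (adj_rel E ends)\<^sup>*)"

definition bipartite_AB :: "'v set \<Rightarrow> 'e set \<Rightarrow> ('e \<Rightarrow> 'v set) \<Rightarrow> 'v set \<Rightarrow> 'v set \<Rightarrow> bool" where
  "bipartite_AB V E ends A B \<longleftrightarrow> A \<union> B = V \<and> A \<inter> B = {} \<and>
     (\<forall>e\<in>E. card (ends e \<inter> A) = 1 \<and> card (ends e \<inter> B) = 1)"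

definition cut :: "'e set \<Rightarrow> ('e \<Rightarrow> 'v set) \<Rightarrow> 'v set \<Rightarrow> 'e set" where
  "cut E ends X = {e\<in>E. card (ends e \<inter> X) = 1}"

definition two_cut :: "'v set \<Rightarrow> 'e set \<Rightarrow> ('e \<Rightarrow> 'v set) \<Rightarrow> 'e set \<Rightarrow> bool" where
  "two_cut V E ends C \<longleftrightarrow> card C = 2 \<and> (\<exists>X\<subseteq>V. C = cut E ends X)"

definition comp_of :: "'v set \<Rightarrow> 'e set \<Rightarrow> ('e \<Rightarrow> 'v set) \<Rightarrow> 'e set \<Rightarrow> 'v \<Rightarrow> 'v set" where
  "comp_of V E ends C v = {w\<in>V. (v, w) \<in> (adj_rel (E - C) ends)\<^sup>*}"

text \<open>Marked C-component on vertex set K (a component of G - C): the edges of G - C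
  inside K (tagged Some) plus a marker edge None joining the two vertices of degree two.\<close>
definition mk_edges :: "'e set \<Rightarrow> ('e \<Rightarrow> 'v set) \<Rightarrow> 'e set \<Rightarrow> 'v set \<Rightarrow> 'e option set" where
  "mk_edges E ends C K = Some ` {e\<in>E - C. ends e \<subseteq> K} \<union> {None}"

definition mk_ends :: "'e set \<Rightarrow> ('e \<Rightarrow> 'v set) \<Rightarrow> 'e set \<Rightarrow> 'v set \<Rightarrow> 'e option \<Rightarrow> 'v set" where
  "mk_ends E ends C K x = (case x of Some e \<Rightarrow> ends e
      | None \<Rightarrow> {v\<in>K. deg (E - C) ends v = 2})"

definition ab_matching :: "'v set \<Rightarrow> 'e set \<Rightarrow> ('e \<Rightarrow> 'v set) \<Rightarrow> 'v \<Rightarrow> 'v \<Rightarrow> 'e set \<Rightarrow> bool" where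
  "ab_matching V E ends a b F \<longleftrightarrow> F \<subseteq> E \<and> deg F ends a = 3 \<and> deg F ends b = 3 \<and>
     (\<forall>v\<in>V - {a, b}. deg F ends v = 1)"

definition lam_matchable :: "'v set \<Rightarrow> 'e set \<Rightarrow> ('e \<Rightarrow> 'v set) \<Rightarrow> 'v \<Rightarrow> 'v \<Rightarrow> bool" where
  "lam_matchable V E ends a b \<longleftrightarrow> (\<exists>F. ab_matching V E ends a b F)"

definition rho :: "'v set \<Rightarrow> 'e set \<Rightarrow> ('e \<Rightarrow> 'v set) \<Rightarrow> 'v set \<Rightarrow> 'v set \<Rightarrow> nat" where
  "rho V E ends A B = card {(a, b). a \<in> A \<and> b \<in> B \<and> lam_matchable V E ends a b}"

end

theory Submission
  imports Defs
begin

text \<open>For a spanning subgraph F of a bipartite graph and a vertex set K, the F-degrees summed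
  over the A-vertices of K minus those summed over the B-vertices of K equal the number of
  F-edges of the cut of K leaving K from A, minus those leaving from B. In the cubic graph
  this forces the two edges of the 2-cut C to leave each component of G - C in opposite
  directions, with equally many A- and B-vertices on each side. For an (a,b)-matching with
  a in the component K it forces b into K and shows that the matching uses either both edges
  of C or neither, so it restricts to an (a,b)-matching of the marked component, the marker
  edge playing the role of C. Conversely, an (a,b)-matching of the marked component extends
  by a perfect matching of the other side (with the two ends of C removed if the marker is
  used). Such a matching exists by Hall's theorem: a set S of A-vertices there has 3|S|
  incident edges, at most two of which leave the other side, while each B-vertex absorbs at
  most three of them. The formula for rho follows because every A-vertex lies in exactly one
  of the two components.\<close>

definition hall_condition :: "'i set \<Rightarrow> ('i \<Rightarrow> 'a set) \<Rightarrow> bool" where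
  "hall_condition I S \<longleftrightarrow> (\<forall>J\<subseteq>I. card J \<le> card (\<Union>(S ` J)))"

lemma hall_condition_Diff_tight:
  assumes fin: "finite I" "\<forall>i\<in>I. finite (S i)" and hall: "hall_condition I S"
    and J: "J \<subseteq> I" "card (\<Union>(S ` J)) \<le> card J"
  shows "hall_condition (I - J) (\<lambda>i. S i - \<Union>(S ` J))"
  unfolding hall_condition_def
proof (intro allI impI)
  fix T assume T: "T \<subseteq> I - J"
  have "finite T" "finite J" using T J(1) fin(1) by (auto intro: finite_subset)
  then have "card T + card J = card (T \<union> J)" using T by (subst card_Un_disjoint) auto
  also have "\<dots> \<le> card (\<Union>(S ` (T \<union> J)))"
    using hall T J(1) unfolding hall_condition_def by (metis Diff_subset Un_subset_iff order_trans)
  also have "\<Union>(S ` (T \<union> J)) = \<Union>((\<lambda>i. S i - \<Union>(S ` J)) ` T) \<union> \<Union>(S ` J)" by auto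
  also have "card \<dots> \<le> card (\<Union>((\<lambda>i. S i - \<Union>(S ` J)) ` T)) + card (\<Union>(S ` J))" by (rule card_Un_le)
  finally show "card T \<le> card (\<Union>((\<lambda>i. S i - \<Union>(S ` J)) ` T))" using J(2) by simp
qed

lemma hall_condition_Diff_surplus:
  assumes fin: "finite I" "\<forall>i\<in>I. finite (S i)" and i: "i \<in> I"
    and surplus: "\<forall>T\<subseteq>I. T \<noteq> {} \<longrightarrow> T \<noteq> I \<longrightarrow> card T < card (\<Union>(S ` T))"
  shows "hall_condition (I - {i}) (\<lambda>j. S j - {x})"
  unfolding hall_condition_def
proof (intro allI impI)
  fix T assume T: "T \<subseteq> I - {i}"
  show "card T \<le> card (\<Union>((\<lambda>j. S j - {x}) ` T))"
  proof (cases "T = {}")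
    case False
    have "finite (\<Union>(S ` T))" using T fin finite_subset by blast
    moreover have "card T < card (\<Union>(S ` T))" using surplus T i False by blast
    moreover have "\<Union>((\<lambda>j. S j - {x}) ` T) = \<Union>(S ` T) - {x}" by auto
    ultimately show ?thesis by (metis card_Diff_singleton_if diff_Suc_1 less_Suc_eq_le less_imp_le_nat
      Suc_pred not_less_zero gr0I)
  qed simp
qed

lemma sdr_combine:
  assumes f: "inj_on f J" "\<forall>i\<in>J. f i \<in> S i"
    and g: "inj_on g (I - J)" "\<forall>i\<in>I - J. g i \<in> S i - f ` J"
  shows "\<exists>h. inj_on h I \<and> (\<forall>i\<in>I. h i \<in> S i)"
proof -
  have "\<forall>i\<in>I - J. g i \<notin> f ` J" using g(2) by blast
  then have "inj_on (\<lambda>i. if i \<in> J then f i else g i) I"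
    using f(1) g(1) unfolding inj_on_def by (metis DiffI imageI)
  moreover have "\<forall>i\<in>I. (if i \<in> J then f i else g i) \<in> S i" using f(2) g(2) by auto
  ultimately show ?thesis by blast
qed

text \<open>Halmos--Vaughan induction: split off a tight proper subfamily if there is one;
  otherwise every proper subfamily has surplus and one index can be matched arbitrarily.\<close>

lemma hall_marriage:
  assumes "finite I" "\<forall>i\<in>I. finite (S i)" "hall_condition I S"
  shows "\<exists>f. inj_on f I \<and> (\<forall>i\<in>I. f i \<in> S i)"
  using assms
proof (induction "card I" arbitrary: I S rule: less_induct)
  case less
  show ?case
  proof (cases "\<exists>J\<subseteq>I. J \<noteq> {} \<and> J \<noteq> I \<and> card (\<Union>(S ` J)) \<le> card J")
    case True
    then obtain J where J: "J \<subseteq> I" "J \<noteq> {}" "J \<noteq> I" "card (\<Union>(S ` J)) \<le> card J" by blast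
    have "finite J" using J(1) less.prems(1) finite_subset by blast
    have "card J < card I" using J(1,3) less.prems(1) by (simp add: psubset_card_mono)
    moreover have "card (I - J) < card I"
    proof -
      have "0 < card J" using \<open>finite J\<close> J(2) by (simp add: card_gt_0_iff)
      then show ?thesis using card_mono[OF less.prems(1) J(1)] \<open>finite J\<close> J(1) by (simp add: card_Diff_subset)
    qed
    moreover have "hall_condition J S"
      using less.prems(3) J(1) by (auto simp: hall_condition_def)
    moreover have "\<forall>i\<in>J. finite (S i)" using less.prems(2) J(1) by blast
    ultimately obtain f where f: "inj_on f J" "\<forall>i\<in>J. f i \<in> S i"
      using less.hyps[OF \<open>card J < card I\<close> \<open>finite J\<close>, of S] by blast
    obtain g where g: "inj_on g (I - J)" "\<forall>i\<in>I - J. g i \<in> S i - \<Union>(S ` J)"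
      using less.hyps[OF \<open>card (I - J) < card I\<close>, of "\<lambda>i. S i - \<Union>(S ` J)"] less.prems(1,2)
        hall_condition_Diff_tight[OF less.prems J(1,4)] by auto
    have "g i \<in> S i - f ` J" if "i \<in> I - J" for i
    proof -
      have "g i \<in> S i" "g i \<notin> \<Union>(S ` J)" using g(2) that by auto
      moreover have "f ` J \<subseteq> \<Union>(S ` J)" using f(2) by auto
      ultimately show ?thesis by blast
    qed
    then show ?thesis using sdr_combine[OF f g(1)] by blast
  next
    case False
    show ?thesis
    proof (cases "I = {}")
      case False
      then obtain i where i: "i \<in> I" by blast
      have "card {i} \<le> card (\<Union>(S ` {i}))"
        using less.prems(3) i unfolding hall_condition_def by blast
      then have "S i \<noteq> {}" by auto
      then obtain x where x: "x \<in> S i" by blast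
      have surplus: "\<forall>T\<subseteq>I. T \<noteq> {} \<longrightarrow> T \<noteq> I \<longrightarrow> card T < card (\<Union>(S ` T))"
        using \<open>\<not> (\<exists>J\<subseteq>I. _)\<close> by (auto simp: not_le)
      obtain g where g: "inj_on g (I - {i})" "\<forall>j\<in>I - {i}. g j \<in> S j - {x}"
        using less.hyps[OF card_Diff1_less[OF less.prems(1) i], of "\<lambda>j. S j - {x}"] less.prems(1,2)
          hall_condition_Diff_surplus[OF less.prems(1,2) i surplus] by auto
      then show ?thesis using sdr_combine[of "\<lambda>_. x" "{i}" S g I] x by simp
    qed simp
  qed
qed

lemma hall_condition_neighbourhoods:
  fixes ends :: "'e \<Rightarrow> 'v set"
  assumes fin: "finite R" "finite F" and disj: "L \<inter> R = {}"
    and edges: "\<forall>e\<in>F. \<exists>u\<in>L. \<exists>w\<in>R. ends e = {u, w}"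
    and deg_R: "\<forall>w\<in>R. deg F ends w \<le> d"
    and expand: "\<forall>S\<subseteq>L. d * card S < card {e\<in>F. ends e \<inter> S \<noteq> {}} + d"
  shows "hall_condition L (\<lambda>u. {w\<in>R. \<exists>e\<in>F. ends e = {u, w}})"
  unfolding hall_condition_def
proof (intro allI impI)
  fix S assume S: "S \<subseteq> L"
  let ?N = "\<Union>u\<in>S. {w\<in>R. \<exists>e\<in>F. ends e = {u, w}}"
  have "{e\<in>F. ends e \<inter> S \<noteq> {}} \<subseteq> (\<Union>w\<in>?N. {e\<in>F. w \<in> ends e})"
  proof
    fix e assume e: "e \<in> {e\<in>F. ends e \<inter> S \<noteq> {}}"
    then obtain u w where "u \<in> L" "w \<in> R" "ends e = {u, w}" using edges by blast
    moreover have "u \<in> S" using calculation e S disj by auto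
    ultimately show "e \<in> (\<Union>w\<in>?N. {e\<in>F. w \<in> ends e})" using e by blast
  qed
  then have "card {e\<in>F. ends e \<inter> S \<noteq> {}} \<le> card (\<Union>w\<in>?N. {e\<in>F. w \<in> ends e})"
    by (intro card_mono finite_subset[OF _ fin(2)]) auto
  also have "\<dots> \<le> (\<Sum>w\<in>?N. deg F ends w)"
    unfolding deg_def by (intro card_UN_le finite_subset[OF _ fin(1)]) auto
  also have "\<dots> \<le> (\<Sum>w\<in>?N. d)" using deg_R by (intro sum_mono) auto
  finally have "card {e\<in>F. ends e \<inter> S \<noteq> {}} \<le> d * card ?N" by (simp add: mult.commute)
  moreover have "d * card S < card {e\<in>F. ends e \<inter> S \<noteq> {}} + d" using expand S by blast
  ultimately have "d * card S < d * Suc (card ?N)" by simp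
  then show "card S \<le> card ?N" by (simp only: mult_less_cancel1 less_Suc_eq_le)
qed

lemma deg_image_matching:
  assumes f: "inj_on f L" "f ` L = R" and disj: "L \<inter> R = {}"
    and g: "\<forall>u\<in>L. ends (g u) = {u, f u}" and v: "v \<in> L \<union> R"
  shows "deg (g ` L) ends v = 1"
proof -
  obtain u0 where u0: "{u\<in>L. v \<in> {u, f u}} = {u0}"
  proof (cases "v \<in> L")
    case True
    then have "{u\<in>L. v \<in> {u, f u}} = {v}" using f(2) disj by auto
    then show ?thesis using that by blast
  next
    case False
    then obtain w where w: "w \<in> L" "v = f w" using v f(2) by blast
    then have "{u\<in>L. v \<in> {u, f u}} = {w}" using False f(1) by (auto simp: inj_on_def)
    then show ?thesis using that by blast
  qed
  have "{e\<in>g ` L. v \<in> ends e} = g ` {u\<in>L. v \<in> {u, f u}}" using g by auto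
  then show ?thesis using u0 by (simp add: deg_def)
qed

lemma bipartite_perfect_matching:
  fixes ends :: "'e \<Rightarrow> 'v set"
  assumes fin: "finite L" "finite R" "finite F" and disj: "L \<inter> R = {}"
    and edges: "\<forall>e\<in>F. \<exists>u\<in>L. \<exists>w\<in>R. ends e = {u, w}"
    and deg_R: "\<forall>w\<in>R. deg F ends w \<le> d" and card_eq: "card L = card R"
    and expand: "\<forall>S\<subseteq>L. d * card S < card {e\<in>F. ends e \<inter> S \<noteq> {}} + d"
  shows "\<exists>M\<subseteq>F. \<forall>v\<in>L \<union> R. deg M ends v = 1"
proof -
  define N where "N u = {w\<in>R. \<exists>e\<in>F. ends e = {u, w}}" for u
  have "\<forall>u\<in>L. finite (N u)" using fin(2) by (simp add: N_def)
  moreover have "hall_condition L N"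
    unfolding N_def by (rule hall_condition_neighbourhoods[OF fin(2,3) disj edges deg_R expand])
  ultimately obtain f where f: "inj_on f L" "\<forall>u\<in>L. f u \<in> N u"
    using hall_marriage[OF fin(1)] by blast
  define g where "g u = (SOME e. e \<in> F \<and> ends e = {u, f u})" for u
  have g: "g u \<in> F \<and> ends (g u) = {u, f u}" if "u \<in> L" for u
    unfolding g_def by (rule someI_ex) (use f(2) that in \<open>auto simp: N_def\<close>)
  have "f ` L \<subseteq> R" using f(2) by (auto simp: N_def)
  moreover have "card (f ` L) = card R" using card_image[OF f(1)] card_eq by simp
  ultimately have "f ` L = R" using card_subset_eq[OF fin(2)] by blast
  then have "\<forall>v\<in>L \<union> R. deg (g ` L) ends v = 1"
    using deg_image_matching[OF f(1) _ disj] g by blast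
  moreover have "g ` L \<subseteq> F" using g by blast
  ultimately show ?thesis by blast
qed

lemma sum_deg_eq_sum_card_ends:
  assumes "finite F" "finite T"
  shows "(\<Sum>v\<in>T. deg F ends v) = (\<Sum>e\<in>F. card (ends e \<inter> T))"
proof -
  have "(\<Sum>v\<in>T. deg F ends v) = (\<Sum>v\<in>T. \<Sum>e\<in>F. of_bool (v \<in> ends e))"
    using assms(1) by (simp add: deg_def Int_def)
  also have "\<dots> = (\<Sum>e\<in>F. \<Sum>v\<in>T. of_bool (v \<in> ends e))" by (rule sum.swap)
  also have "\<dots> = (\<Sum>e\<in>F. card (ends e \<inter> T))"
    using assms(2) by (simp add: Int_commute Int_def)
  finally show ?thesis .
qed

lemma sym_adj_rel: "sym (adj_rel F ends)"
  unfolding sym_def adj_rel_def by (auto simp: insert_commute)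

locale cubic_bipartite =
  fixes V :: "'v set" and E :: "'e set" and ends :: "'e \<Rightarrow> 'v set" and A B :: "'v set"
  assumes mgraph: "mgraph V E ends" and cubic: "cubic V E ends"
    and bipartite: "bipartite_AB V E ends A B"
begin

lemma finite_V: "finite V" and finite_E: "finite E" and ends_subset: "e \<in> E \<Longrightarrow> ends e \<subseteq> V"
  using mgraph by (auto simp: mgraph_def)

lemma V_eq: "V = A \<union> B" and A_B_disjoint: "A \<inter> B = {}"
  using bipartite by (auto simp: bipartite_AB_def)

lemma finite_A: "finite A" and finite_B: "finite B"
  using finite_V V_eq by auto

lemma deg_E: "v \<in> V \<Longrightarrow> deg E ends v = 3"
  using cubic by (simp add: cubic_def)

definition a_end :: "'e \<Rightarrow> 'v" where "a_end e = (THE u. u \<in> ends e \<inter> A)"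
definition b_end :: "'e \<Rightarrow> 'v" where "b_end e = (THE u. u \<in> ends e \<inter> B)"

lemma ends_inter_A: "e \<in> E \<Longrightarrow> ends e \<inter> A = {a_end e}"
proof -
  assume "e \<in> E"
  then have "card (ends e \<inter> A) = 1" using bipartite by (simp add: bipartite_AB_def)
  then obtain x where "ends e \<inter> A = {x}" by (rule card_1_singletonE)
  then show ?thesis by (simp add: a_end_def)
qed

lemma ends_inter_B: "e \<in> E \<Longrightarrow> ends e \<inter> B = {b_end e}"
proof -
  assume "e \<in> E"
  then have "card (ends e \<inter> B) = 1" using bipartite by (simp add: bipartite_AB_def)
  then obtain x where "ends e \<inter> B = {x}" by (rule card_1_singletonE)
  then show ?thesis by (simp add: b_end_def)
qed

lemma a_end_in_A: "e \<in> E \<Longrightarrow> a_end e \<in> A" and b_end_in_B: "e \<in> E \<Longrightarrow> b_end e \<in> B"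
  using ends_inter_A ends_inter_B by (metis IntD2 insertI1)+

lemma ends_eq: "e \<in> E \<Longrightarrow> ends e = {a_end e, b_end e}"
proof -
  assume e: "e \<in> E"
  then have "ends e = (ends e \<inter> A) \<union> (ends e \<inter> B)" using ends_subset V_eq by blast
  also have "\<dots> = {a_end e} \<union> {b_end e}" using ends_inter_A[OF e] ends_inter_B[OF e] by (rule arg_cong2)
  finally show ?thesis by (simp add: insert_commute)
qed

lemma a_end_in_V: "e \<in> E \<Longrightarrow> a_end e \<in> V" and b_end_in_V: "e \<in> E \<Longrightarrow> b_end e \<in> V"
  using a_end_in_A b_end_in_B V_eq by auto

lemma a_end_neq_b_end: "e \<in> E \<Longrightarrow> a_end e \<noteq> b_end e"
  using a_end_in_A b_end_in_B A_B_disjoint by (metis disjoint_iff)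

lemma mem_cut_iff: "e \<in> E \<Longrightarrow> e \<in> cut E ends K \<longleftrightarrow> (a_end e \<in> K \<longleftrightarrow> b_end e \<notin> K)"
proof -
  assume e: "e \<in> E"
  have "ends e \<inter> K = (if a_end e \<in> K then {a_end e} else {}) \<union> (if b_end e \<in> K then {b_end e} else {})"
    using ends_eq[OF e] by auto
  then show ?thesis using e a_end_neq_b_end[OF e] by (auto simp: cut_def)
qed

lemma cut_subset: "cut E ends K \<subseteq> E"
  by (auto simp: cut_def)

lemma cut_Diff_eq: "cut E ends (V - X) = cut E ends X"
proof (rule set_eqI)
  fix e show "e \<in> cut E ends (V - X) \<longleftrightarrow> e \<in> cut E ends X"
  proof (cases "e \<in> E")
    case True
    then show ?thesis by (simp add: mem_cut_iff a_end_in_V b_end_in_V) blast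
  qed (use cut_subset in blast)
qed

lemma sum_deg_inter_A:
  assumes "F \<subseteq> E"
  shows "(\<Sum>v\<in>A \<inter> K. deg F ends v) = (\<Sum>e\<in>F. of_bool (a_end e \<in> K))"
proof -
  have "finite F" using assms finite_E finite_subset by blast
  then have "(\<Sum>v\<in>A \<inter> K. deg F ends v) = (\<Sum>e\<in>F. card (ends e \<inter> (A \<inter> K)))"
    using finite_A by (simp add: sum_deg_eq_sum_card_ends)
  also have "\<dots> = (\<Sum>e\<in>F. of_bool (a_end e \<in> K))"
  proof (rule sum.cong[OF refl])
    fix e assume "e \<in> F"
    then have "ends e \<inter> (A \<inter> K) = {a_end e} \<inter> K" using assms ends_inter_A by blast
    then show "card (ends e \<inter> (A \<inter> K)) = of_bool (a_end e \<in> K)" by simp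
  qed
  finally show ?thesis .
qed

lemma sum_deg_inter_B:
  assumes "F \<subseteq> E"
  shows "(\<Sum>v\<in>B \<inter> K. deg F ends v) = (\<Sum>e\<in>F. of_bool (b_end e \<in> K))"
proof -
  have "finite F" using assms finite_E finite_subset by blast
  then have "(\<Sum>v\<in>B \<inter> K. deg F ends v) = (\<Sum>e\<in>F. card (ends e \<inter> (B \<inter> K)))"
    using finite_B by (simp add: sum_deg_eq_sum_card_ends)
  also have "\<dots> = (\<Sum>e\<in>F. of_bool (b_end e \<in> K))"
  proof (rule sum.cong[OF refl])
    fix e assume "e \<in> F"
    then have "ends e \<inter> (B \<inter> K) = {b_end e} \<inter> K" using assms ends_inter_B by blast
    then show "card (ends e \<inter> (B \<inter> K)) = of_bool (b_end e \<in> K)" by simp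
  qed
  finally show ?thesis .
qed

definition cut_sign :: "'v set \<Rightarrow> 'e \<Rightarrow> int" where
  "cut_sign K e = (if a_end e \<in> K then 1 else -1)"

lemma signed_degree_balance:
  assumes F: "F \<subseteq> E"
  shows "int (\<Sum>v\<in>A \<inter> K. deg F ends v) - int (\<Sum>v\<in>B \<inter> K. deg F ends v)
       = (\<Sum>e\<in>F \<inter> cut E ends K. cut_sign K e)"
proof -
  define g :: "'e \<Rightarrow> int" where "g e = of_bool (a_end e \<in> K) - of_bool (b_end e \<in> K)" for e
  have fin: "finite F" using F finite_E finite_subset by blast
  have "int (\<Sum>v\<in>A \<inter> K. deg F ends v) - int (\<Sum>v\<in>B \<inter> K. deg F ends v) = (\<Sum>e\<in>F. g e)"
    unfolding sum_deg_inter_A[OF F] sum_deg_inter_B[OF F] g_def by (simp add: sum_subtractf)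
  also have "\<dots> = (\<Sum>e\<in>F \<inter> cut E ends K. g e) + (\<Sum>e\<in>F - cut E ends K. g e)"
    by (rule sum.Int_Diff[OF fin])
  also have "(\<Sum>e\<in>F - cut E ends K. g e) = 0"
    using F mem_cut_iff by (intro sum.neutral) (auto simp: g_def)
  also have "(\<Sum>e\<in>F \<inter> cut E ends K. g e) = (\<Sum>e\<in>F \<inter> cut E ends K. cut_sign K e)"
    using F mem_cut_iff by (intro sum.cong) (auto simp: g_def cut_sign_def)
  finally show ?thesis by simp
qed

lemma cubic_cut_balance:
  "3 * (int (card (A \<inter> K)) - int (card (B \<inter> K))) = (\<Sum>e\<in>cut E ends K. cut_sign K e)"
proof -
  have "(\<Sum>v\<in>A \<inter> K. deg E ends v) = 3 * card (A \<inter> K)" "(\<Sum>v\<in>B \<inter> K. deg E ends v) = 3 * card (B \<inter> K)"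
    using deg_E V_eq by simp_all
  moreover have "E \<inter> cut E ends K = cut E ends K" using cut_subset by blast
  ultimately show ?thesis using signed_degree_balance[of E K] by simp
qed

lemma card_A_eq_card_B: "card A = card B"
proof -
  have "e \<notin> cut E ends V" for e
    using cut_subset by (cases "e \<in> E") (auto simp: mem_cut_iff a_end_in_V b_end_in_V)
  then have "cut E ends V = {}" by blast
  moreover have "A \<inter> V = A" "B \<inter> V = B" using V_eq by auto
  ultimately show ?thesis using cubic_cut_balance[of V] by simp
qed

lemma card_edges_at_A:
  assumes "S \<subseteq> A"
  shows "card {e\<in>E. a_end e \<in> S} = 3 * card S"
proof -
  have "(\<Sum>v\<in>A \<inter> S. deg E ends v) = (\<Sum>v\<in>S. 3)"
    using assms deg_E V_eq by (intro sum.cong) auto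
  moreover have "(\<Sum>v\<in>A \<inter> S. deg E ends v) = card {e\<in>E. a_end e \<in> S}"
    using sum_deg_inter_A[of E S] finite_E by (simp add: Int_def)
  ultimately show ?thesis by simp
qed

lemma sum_deg_ab_matching:
  assumes F: "ab_matching V E ends a b F" and "a \<noteq> b" and X: "X \<subseteq> V"
  shows "(\<Sum>v\<in>X. deg F ends v) = card X + 2 * of_bool (a \<in> X) + 2 * of_bool (b \<in> X)"
proof -
  have "finite X" using X finite_V finite_subset by blast
  have "deg F ends v = 1 + 2 * of_bool (v = a) + 2 * of_bool (v = b)" if "v \<in> X" for v
    using F \<open>a \<noteq> b\<close> X that by (auto simp: ab_matching_def)
  then have "(\<Sum>v\<in>X. deg F ends v) = (\<Sum>v\<in>X. 1 + 2 * of_bool (v = a) + 2 * of_bool (v = b))"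
    by (rule sum.cong[OF refl])
  also have "\<dots> = (\<Sum>v\<in>X. 1) + 2 * (\<Sum>v\<in>X. of_bool (v = a)) + 2 * (\<Sum>v\<in>X. of_bool (v = b))"
    by (simp only: sum.distrib sum_distrib_left)
  also have "\<dots> = card X + 2 * of_bool (a \<in> X) + 2 * of_bool (b \<in> X)"
    using \<open>finite X\<close> by (simp add: of_bool_def sum.delta')
  finally show ?thesis .
qed

lemma perfect_matching_with_few_escaping_edges:
  assumes L: "L \<subseteq> A" and R: "R \<subseteq> B" and card_eq: "card L = card R"
    and escaping: "\<forall>S\<subseteq>L. card {e\<in>E. a_end e \<in> S \<and> b_end e \<notin> R} \<le> 2"
  shows "\<exists>M\<subseteq>E. (\<forall>e\<in>M. ends e \<subseteq> L \<union> R) \<and> (\<forall>v\<in>L \<union> R. deg M ends v = 1)"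
proof -
  define F where "F = {e\<in>E. a_end e \<in> L \<and> b_end e \<in> R}"
  have fin: "finite L" "finite R" "finite F"
    using finite_subset[OF L finite_A] finite_subset[OF R finite_B] finite_E by (simp_all add: F_def)
  have disj: "L \<inter> R = {}" using L R A_B_disjoint by blast
  have ends_F: "ends e = {a_end e, b_end e} \<and> a_end e \<in> L \<and> b_end e \<in> R" if "e \<in> F" for e
    using that ends_eq by (simp add: F_def)
  then have edges: "\<forall>e\<in>F. \<exists>u\<in>L. \<exists>w\<in>R. ends e = {u, w}" by blast
  have deg_R: "\<forall>w\<in>R. deg F ends w \<le> 3"
  proof
    fix w assume "w \<in> R"
    then have "deg E ends w = 3" using R V_eq deg_E by blast
    moreover have "deg F ends w \<le> deg E ends w"
      unfolding deg_def using finite_E by (intro card_mono) (auto simp: F_def)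
    ultimately show "deg F ends w \<le> 3" by simp
  qed
  have expand: "\<forall>S\<subseteq>L. 3 * card S < card {e\<in>F. ends e \<inter> S \<noteq> {}} + 3"
  proof (intro allI impI)
    fix S assume S: "S \<subseteq> L"
    let ?inner = "{e\<in>F. ends e \<inter> S \<noteq> {}}" and ?escaping = "{e\<in>E. a_end e \<in> S \<and> b_end e \<notin> R}"
    have "ends e \<inter> S \<noteq> {}" if "e \<in> E" "a_end e \<in> S" for e
      using ends_eq[OF that(1)] that(2) by auto
    then have "{e\<in>E. a_end e \<in> S} \<subseteq> ?inner \<union> ?escaping"
      using S by (auto simp: F_def)
    then have "card {e\<in>E. a_end e \<in> S} \<le> card (?inner \<union> ?escaping)"
      using fin(3) finite_E by (intro card_mono) auto
    also have "\<dots> \<le> card ?inner + card ?escaping" by (rule card_Un_le)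
    finally have "3 * card S \<le> card ?inner + card ?escaping"
      using card_edges_at_A[OF order_trans[OF S L]] by simp
    moreover have "card ?escaping \<le> 2" using escaping[rule_format, OF S] .
    ultimately show "3 * card S < card ?inner + 3" by linarith
  qed
  obtain M where M: "M \<subseteq> F" "\<forall>v\<in>L \<union> R. deg M ends v = 1"
    using bipartite_perfect_matching[OF fin disj edges deg_R card_eq expand] by blast
  moreover have "M \<subseteq> E" using M(1) by (auto simp: F_def)
  moreover have "\<forall>e\<in>M. ends e \<subseteq> L \<union> R"
  proof
    fix e assume "e \<in> M"
    then show "ends e \<subseteq> L \<union> R" using ends_F[of e] M(1) by auto
  qed
  ultimately show ?thesis by blast
qed

lemma rtrancl_adj_rel_stays_in:
  assumes "(v, z) \<in> (adj_rel F ends)\<^sup>*" and F: "F \<subseteq> E" "F \<inter> cut E ends S = {}" and "v \<in> S"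
  shows "z \<in> S"
  using assms(1)
proof (induction rule: rtrancl_induct)
  case base
  show ?case using \<open>v \<in> S\<close> .
next
  case (step y z)
  then obtain e where e: "e \<in> F" "ends e = {y, z}" by (auto simp: adj_rel_def)
  then have "e \<in> E" "e \<notin> cut E ends S" using F by auto
  then have "a_end e \<in> S \<longleftrightarrow> b_end e \<in> S" by (simp add: mem_cut_iff)
  moreover have "{y, z} = {a_end e, b_end e}" using e ends_eq[OF \<open>e \<in> E\<close>] by simp
  ultimately show ?case using step.IH by (auto simp: doubleton_eq_iff)
qed

lemma card_cut_neq_1: "card (cut E ends K) \<noteq> 1"
proof
  assume "card (cut E ends K) = 1"
  then obtain c where "cut E ends K = {c}" by (rule card_1_singletonE)
  then have "3 * (int (card (A \<inter> K)) - int (card (B \<inter> K))) = cut_sign K c"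
    using cubic_cut_balance[of K] by simp
  then show False by (simp add: cut_sign_def split: if_splits; presburger)
qed

lemma two_edge_cut_balanced:
  assumes cut: "cut E ends K = {c1, c2}" "c1 \<noteq> c2"
  shows "cut_sign K c1 = - cut_sign K c2" and "card (A \<inter> K) = card (B \<inter> K)"
proof -
  have balance: "3 * (int (card (A \<inter> K)) - int (card (B \<inter> K))) = cut_sign K c1 + cut_sign K c2"
    using cubic_cut_balance[of K] cut by simp
  then show "cut_sign K c1 = - cut_sign K c2"
    by (simp add: cut_sign_def split: if_splits; presburger)
  then show "card (A \<inter> K) = card (B \<inter> K)" using balance by simp
qed

end

locale cubic_bipartite_two_cut = cubic_bipartite V E ends A B
  for V :: "'v set" and E :: "'e set" and ends :: "'e \<Rightarrow> 'v set" and A B :: "'v set" +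
  fixes C :: "'e set"
  assumes connected: "connected_mg V E ends" and two_cut: "two_cut V E ends C"
begin

lemma card_C: "card C = 2" and C_subset: "C \<subseteq> E" and finite_C: "finite C"
  using two_cut cut_subset finite_subset[OF _ finite_E] by (auto simp: two_cut_def)

lemma cut_nonempty:
  assumes "Z \<subseteq> V" "Z \<noteq> {}" "V - Z \<noteq> {}"
  shows "cut E ends Z \<noteq> {}"
proof
  assume "cut E ends Z = {}"
  obtain u w where "u \<in> Z" "w \<in> V - Z" using assms by blast
  moreover from this have "(u, w) \<in> (adj_rel E ends)\<^sup>*"
    using connected assms(1) by (auto simp: connected_mg_def)
  ultimately show False
    using rtrancl_adj_rel_stays_in[of u w E] \<open>cut E ends Z = {}\<close> by blast
qed

lemma comp_of_subset: "comp_of V E ends C v \<subseteq> V"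
  by (auto simp: comp_of_def)

lemma mem_comp_of: "v \<in> V \<Longrightarrow> v \<in> comp_of V E ends C v"
  by (simp add: comp_of_def)

lemma comp_of_subset_side:
  assumes "(E - C) \<inter> cut E ends S = {}" "v \<in> S"
  shows "comp_of V E ends C v \<subseteq> S"
  using rtrancl_adj_rel_stays_in[of v _ "E - C" S] assms by (auto simp: comp_of_def)

lemma cut_comp_of_subset: "cut E ends (comp_of V E ends C v) \<subseteq> C"
proof
  fix e assume e: "e \<in> cut E ends (comp_of V E ends C v)"
  show "e \<in> C"
  proof (rule ccontr)
    assume "e \<notin> C"
    have "e \<in> E" using e cut_subset by blast
    then have "(a_end e, b_end e) \<in> adj_rel (E - C) ends" "(b_end e, a_end e) \<in> adj_rel (E - C) ends"
      using \<open>e \<notin> C\<close> ends_eq[OF \<open>e \<in> E\<close>] by (auto simp: adj_rel_def insert_commute)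
    then show False
      using e \<open>e \<in> E\<close> a_end_in_V b_end_in_V
      by (auto simp: mem_cut_iff comp_of_def intro: rtrancl_into_rtrancl)
  qed
qed

lemma cut_comp_of:
  assumes v: "v \<in> V"
  shows "cut E ends (comp_of V E ends C v) = C"
proof -
  define K where "K = comp_of V E ends C v"
  obtain X where X: "X \<subseteq> V" "C = cut E ends X" using two_cut by (auto simp: two_cut_def)
  have "V - K \<noteq> {}"
  proof -
    obtain c where "c \<in> C" using card_C by fastforce
    then have "c \<in> E" "a_end c \<in> X \<longleftrightarrow> b_end c \<notin> X" using C_subset X(2) mem_cut_iff by auto
    then obtain x y where "x \<in> X" "y \<in> V - X" using a_end_in_V b_end_in_V by blast
    moreover have "K \<subseteq> X \<or> K \<subseteq> V - X"
      using comp_of_subset_side[of X v] comp_of_subset_side[of "V - X" v] v X(2) cut_Diff_eq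
      by (auto simp: K_def)
    ultimately show ?thesis using X(1) by blast
  qed
  then have "cut E ends K \<noteq> {}" using cut_nonempty comp_of_subset mem_comp_of[OF v] by (auto simp: K_def)
  moreover have sub: "cut E ends K \<subseteq> C" using cut_comp_of_subset by (simp add: K_def)
  ultimately have "card (cut E ends K) \<noteq> 0" using finite_subset[OF _ finite_C] by auto
  moreover have "card (cut E ends K) \<le> card C" using card_mono[OF finite_C sub] .
  ultimately have "card (cut E ends K) = card C" using card_cut_neq_1[of K] card_C by linarith
  then show ?thesis using card_subset_eq[OF finite_C sub] by (simp add: K_def)
qed

lemma cut_eq_C_orientation:
  assumes K: "cut E ends K = C"
  obtains c1 c2 where "C = {c1, c2}" "c1 \<noteq> c2" "a_end c1 \<in> K" "b_end c1 \<notin> K"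
    "a_end c2 \<notin> K" "b_end c2 \<in> K"
proof -
  obtain x y where xy: "C = {x, y}" "x \<noteq> y" using card_C by (auto simp: card_2_iff)
  then have "x \<in> E" "y \<in> E" "x \<in> cut E ends K" "y \<in> cut E ends K" using C_subset K by auto
  then have x: "a_end x \<in> K \<longleftrightarrow> b_end x \<notin> K" and y: "a_end y \<in> K \<longleftrightarrow> b_end y \<notin> K"
    by (simp_all add: mem_cut_iff)
  have "cut_sign K x = - cut_sign K y" using two_edge_cut_balanced(1) K xy by simp
  then have "a_end x \<in> K \<longleftrightarrow> a_end y \<notin> K" by (auto simp: cut_sign_def split: if_splits)
  then show ?thesis
    using that[of x y] that[of y x] xy x y by (cases "a_end x \<in> K") (auto simp: insert_commute)
qed

lemma comp_of_eq:
  assumes "z \<in> comp_of V E ends C x"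
  shows "comp_of V E ends C z = comp_of V E ends C x"
proof -
  have xz: "(x, z) \<in> (adj_rel (E - C) ends)\<^sup>*" using assms by (simp add: comp_of_def)
  then have "(z, x) \<in> (adj_rel (E - C) ends)\<^sup>*" by (rule symD[OF sym_rtrancl[OF sym_adj_rel]])
  then show ?thesis using xz by (auto simp: comp_of_def intro: rtrancl_trans)
qed

lemma comp_of_complement:
  assumes x: "x \<in> V" and y: "y \<in> V"
    and neq: "comp_of V E ends C x \<noteq> comp_of V E ends C y"
  shows "comp_of V E ends C y = V - comp_of V E ends C x"
proof -
  define K1 K2 where "K1 = comp_of V E ends C x" and "K2 = comp_of V E ends C y"
  have cuts: "cut E ends K1 = C" "cut E ends K2 = C" using cut_comp_of x y by (simp_all add: K1_def K2_def)
  have disj: "K1 \<inter> K2 = {}"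
  proof (rule ccontr)
    assume "K1 \<inter> K2 \<noteq> {}"
    then obtain z where "z \<in> K1" "z \<in> K2" by blast
    then show False using comp_of_eq[of z x] comp_of_eq[of z y] neq by (simp add: K1_def K2_def)
  qed
  have "e \<notin> cut E ends (K1 \<union> K2)" if e: "e \<in> E" for e
  proof -
    have "(a_end e \<in> K1 \<longleftrightarrow> b_end e \<notin> K1) \<longleftrightarrow> (a_end e \<in> K2 \<longleftrightarrow> b_end e \<notin> K2)"
      using cuts mem_cut_iff[OF e, of K1] mem_cut_iff[OF e, of K2] by simp
    then show ?thesis using disj by (simp add: mem_cut_iff[OF e]) blast
  qed
  then have "cut E ends (K1 \<union> K2) = {}" using cut_subset by blast
  then have "K1 \<union> K2 = V"
    using cut_nonempty[of "K1 \<union> K2"] comp_of_subset mem_comp_of[OF x] by (auto simp: K1_def K2_def)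
  then show ?thesis using disj by (auto simp: K1_def K2_def)
qed

end

locale two_cut_side = cubic_bipartite_two_cut V E ends A B C
  for V :: "'v set" and E :: "'e set" and ends :: "'e \<Rightarrow> 'v set" and A B :: "'v set"
    and C :: "'e set" +
  fixes K :: "'v set" and c1 c2 :: 'e
  assumes K_subset: "K \<subseteq> V" and cut_K: "cut E ends K = C"
    and C_eq: "C = {c1, c2}" and c1_neq_c2: "c1 \<noteq> c2"
    and a_end_c1: "a_end c1 \<in> K" and b_end_c1: "b_end c1 \<notin> K"
    and a_end_c2: "a_end c2 \<notin> K" and b_end_c2: "b_end c2 \<in> K"
begin

lemma c1_in_E: "c1 \<in> E" and c2_in_E: "c2 \<in> E"
  using C_eq C_subset by auto

lemma card_inside_balanced: "card (A \<inter> K) = card (B \<inter> K)"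
  using two_edge_cut_balanced(2) cut_K C_eq c1_neq_c2 by simp

lemma card_outside_balanced: "card (A - K) = card (B - K)"
  using card_inside_balanced card_A_eq_card_B finite_A finite_B by (simp add: card_Diff_subset_Int)

lemma edge_inside_iff: "e \<in> E \<Longrightarrow> e \<notin> C \<Longrightarrow> a_end e \<in> K \<longleftrightarrow> b_end e \<in> K"
  using mem_cut_iff[of e K] cut_K by blast

lemma card_C_at:
  assumes "v \<in> ends c1 \<longleftrightarrow> v = x" "v \<in> ends c2 \<longleftrightarrow> v = y" "x \<noteq> y"
  shows "card {c\<in>C. v \<in> ends c} = of_bool (v = x \<or> v = y)"
proof -
  have "{c\<in>C. v \<in> ends c} = (if v = x then {c1} else {}) \<union> (if v = y then {c2} else {})"
    using assms(1,2) unfolding C_eq by auto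
  then have "card {c\<in>C. v \<in> ends c} = card ((if v = x then {c1} else {}) \<union> (if v = y then {c2} else {}))"
    by (rule arg_cong)
  also have "\<dots> = of_bool (v = x \<or> v = y)"
    using assms(3) c1_neq_c2 by (cases "v = x"; cases "v = y") simp_all
  finally show ?thesis .
qed

lemma card_C_at_inside:
  assumes "v \<in> K"
  shows "card {c\<in>C. v \<in> ends c} = of_bool (v = a_end c1 \<or> v = b_end c2)"
proof (rule card_C_at)
  show "v \<in> ends c1 \<longleftrightarrow> v = a_end c1" "v \<in> ends c2 \<longleftrightarrow> v = b_end c2"
    using assms b_end_c1 a_end_c2 ends_eq[OF c1_in_E] ends_eq[OF c2_in_E] by auto
  show "a_end c1 \<noteq> b_end c2"
    using a_end_in_A[OF c1_in_E] b_end_in_B[OF c2_in_E] A_B_disjoint by (metis disjoint_iff)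
qed

lemma card_C_at_outside:
  assumes "v \<notin> K"
  shows "card {c\<in>C. v \<in> ends c} = of_bool (v = b_end c1 \<or> v = a_end c2)"
proof (rule card_C_at)
  show "v \<in> ends c1 \<longleftrightarrow> v = b_end c1" "v \<in> ends c2 \<longleftrightarrow> v = a_end c2"
    using assms a_end_c1 b_end_c2 ends_eq[OF c1_in_E] ends_eq[OF c2_in_E] by auto
  show "b_end c1 \<noteq> a_end c2"
    using b_end_in_B[OF c1_in_E] a_end_in_A[OF c2_in_E] A_B_disjoint by (metis disjoint_iff)
qed

lemma deg_split_C:
  assumes "F \<subseteq> E"
  shows "deg F ends v = deg (F - C) ends v + card {c\<in>F \<inter> C. v \<in> ends c}"
proof -
  have "finite F" using assms finite_E finite_subset by blast
  moreover have "{e\<in>F. v \<in> ends e} = {e\<in>F - C. v \<in> ends e} \<union> {c\<in>F \<inter> C. v \<in> ends c}" by blast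
  ultimately show ?thesis by (simp add: deg_def card_Un_disjoint disjoint_iff)
qed

lemma deg_E_minus_C: "v \<in> V \<Longrightarrow> deg (E - C) ends v = 3 - card {c\<in>C. v \<in> ends c}"
  using deg_split_C[of E v] deg_E C_subset by (simp add: Int_absorb1)

lemma mk_ends_None: "mk_ends E ends C K None = {a_end c1, b_end c2}"
proof -
  have "deg (E - C) ends v = 2 \<longleftrightarrow> v = a_end c1 \<or> v = b_end c2" if "v \<in> K" for v
  proof -
    have "deg (E - C) ends v = 3 - of_bool (v = a_end c1 \<or> v = b_end c2)"
      using that K_subset deg_E_minus_C card_C_at_inside by (metis subsetD)
    then show ?thesis by (cases "v = a_end c1 \<or> v = b_end c2") simp_all
  qed
  then show ?thesis using a_end_c1 b_end_c2 by (auto simp: mk_ends_def)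
qed

text \<open>The marker edge \<^term>\<open>None\<close> stands for the pair C = {c1, c2}, which an
  (a,b)-matching with a in K uses completely or not at all.\<close>

definition marked_restriction :: "'e set \<Rightarrow> 'e option set" where
  "marked_restriction F = Some ` {e\<in>F - C. ends e \<subseteq> K} \<union> (if c1 \<in> F then {None} else {})"

lemma marked_restriction_subset: "F \<subseteq> E \<Longrightarrow> marked_restriction F \<subseteq> mk_edges E ends C K"
  by (auto simp: marked_restriction_def mk_edges_def)

lemma edges_at_inside_vertex:
  assumes "F \<subseteq> E" "v \<in> K"
  shows "{e\<in>F - C. ends e \<subseteq> K \<and> v \<in> ends e} = {e\<in>F - C. v \<in> ends e}"
proof -
  have "ends e \<subseteq> K" if "e \<in> F - C" "v \<in> ends e" for e
  proof -
    have "e \<in> E" using that assms(1) by blast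
    then have "a_end e \<in> K \<longleftrightarrow> b_end e \<in> K" using edge_inside_iff that by blast
    then show ?thesis using that(2) assms(2) ends_eq[OF \<open>e \<in> E\<close>] by auto
  qed
  then show ?thesis by blast
qed

lemma deg_marked_restriction:
  assumes F: "F \<subseteq> E" and v: "v \<in> K" and cc: "c1 \<in> F \<longleftrightarrow> c2 \<in> F"
  shows "deg (marked_restriction F) (mk_ends E ends C K) v = deg F ends v"
proof -
  define N :: "'e option set" where "N = (if c1 \<in> F then {None} else {})"
  have "finite F" using F finite_E finite_subset by blast
  have "{x\<in>marked_restriction F. v \<in> mk_ends E ends C K x}
      = Some ` {e\<in>F - C. ends e \<subseteq> K \<and> v \<in> ends e} \<union> {x\<in>N. v \<in> {a_end c1, b_end c2}}"
    using mk_ends_None unfolding marked_restriction_def N_def by (auto simp: mk_ends_def)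
  also have "\<dots> = Some ` {e\<in>F - C. v \<in> ends e} \<union> {x\<in>N. v \<in> {a_end c1, b_end c2}}"
    using edges_at_inside_vertex[OF F v] by simp
  also have "card \<dots> = card (Some ` {e\<in>F - C. v \<in> ends e}) + card {x\<in>N. v \<in> {a_end c1, b_end c2}}"
    by (rule card_Un_disjoint) (use \<open>finite F\<close> in \<open>auto simp: N_def\<close>)
  finally have "deg (marked_restriction F) (mk_ends E ends C K) v
      = card {e\<in>F - C. v \<in> ends e} + card {x\<in>N. v \<in> {a_end c1, b_end c2}}"
    by (simp add: deg_def card_image)
  also have "card {x\<in>N. v \<in> {a_end c1, b_end c2}} = card {c\<in>F \<inter> C. v \<in> ends c}"
  proof (cases "c1 \<in> F")
    case True
    then have "F \<inter> C = C" using cc C_eq by blast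
    then show ?thesis using True card_C_at_inside[OF v] by (simp add: N_def)
  next
    case False
    then have "F \<inter> C = {}" using cc C_eq by blast
    then show ?thesis using False by (simp add: N_def)
  qed
  finally show ?thesis using deg_split_C[OF F, of v] unfolding deg_def by simp
qed

lemma ab_matching_crossing_balance:
  assumes a: "a \<in> A \<inter> K" and b: "b \<in> B" and F: "ab_matching V E ends a b F"
  shows "2 - 2 * of_bool (b \<in> K) = (of_bool (c1 \<in> F) - of_bool (c2 \<in> F) :: int)"
proof -
  have FE: "F \<subseteq> E" using F by (simp add: ab_matching_def)
  have "a \<noteq> b" using a b A_B_disjoint by blast
  have "b \<notin> A" "a \<notin> B" using a b A_B_disjoint by blast+
  moreover have "A \<inter> K \<subseteq> V" "B \<inter> K \<subseteq> V" using V_eq by auto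
  ultimately have "(\<Sum>v\<in>A \<inter> K. deg F ends v) = card (A \<inter> K) + 2"
    "(\<Sum>v\<in>B \<inter> K. deg F ends v) = card (B \<inter> K) + 2 * of_bool (b \<in> K)"
    using sum_deg_ab_matching[OF F \<open>a \<noteq> b\<close>, of "A \<inter> K"] sum_deg_ab_matching[OF F \<open>a \<noteq> b\<close>, of "B \<inter> K"] a b
    by simp_all
  moreover have "(\<Sum>e\<in>F \<inter> cut E ends K. cut_sign K e) = of_bool (c1 \<in> F) - of_bool (c2 \<in> F)"
  proof -
    have "(\<Sum>e\<in>F \<inter> cut E ends K. cut_sign K e) = (\<Sum>e\<in>{c1, c2}. if e \<in> F then cut_sign K e else 0)"
      unfolding cut_K C_eq Int_commute[of F] by (rule sum.inter_restrict) simp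
    also have "\<dots> = of_bool (c1 \<in> F) - of_bool (c2 \<in> F)"
      using c1_neq_c2 a_end_c1 a_end_c2 by (simp add: cut_sign_def)
    finally show ?thesis .
  qed
  ultimately show ?thesis using signed_degree_balance[OF FE, of K] card_inside_balanced by simp
qed

lemma ab_matching_restrict:
  assumes a: "a \<in> A \<inter> K" and b: "b \<in> B" and F: "ab_matching V E ends a b F"
  shows "b \<in> K"
    and "ab_matching K (mk_edges E ends C K) (mk_ends E ends C K) a b (marked_restriction F)"
proof -
  have balance: "2 - 2 * of_bool (b \<in> K) = (of_bool (c1 \<in> F) - of_bool (c2 \<in> F) :: int)"
    by (rule ab_matching_crossing_balance[OF assms])
  then show "b \<in> K" by (cases "b \<in> K"; cases "c1 \<in> F"; cases "c2 \<in> F") simp_all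
  then have cc: "c1 \<in> F \<longleftrightarrow> c2 \<in> F" using balance by (cases "c1 \<in> F"; cases "c2 \<in> F") simp_all
  have FE: "F \<subseteq> E" using F by (simp add: ab_matching_def)
  show "ab_matching K (mk_edges E ends C K) (mk_ends E ends C K) a b (marked_restriction F)"
    using F \<open>b \<in> K\<close> a K_subset marked_restriction_subset[OF FE] deg_marked_restriction[OF FE _ cc]
    by (auto simp: ab_matching_def)
qed

lemma perfect_matching_outside:
  obtains M where "M \<subseteq> E" "\<forall>e\<in>M. ends e \<subseteq> V - K" "\<forall>v\<in>V - K. deg M ends v = 1"
proof -
  have "{e\<in>E. a_end e \<in> S \<and> b_end e \<notin> B - K} \<subseteq> C" if "S \<subseteq> A - K" for S
  proof
    fix e assume e: "e \<in> {e\<in>E. a_end e \<in> S \<and> b_end e \<notin> B - K}"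
    then have "a_end e \<notin> K" "b_end e \<in> K" using that b_end_in_B by auto
    then show "e \<in> C" using e cut_K mem_cut_iff by blast
  qed
  then have "\<forall>S\<subseteq>A - K. card {e\<in>E. a_end e \<in> S \<and> b_end e \<notin> B - K} \<le> 2"
    using card_mono[OF finite_C] card_C by fastforce
  moreover have "(A - K) \<union> (B - K) = V - K" using V_eq by blast
  ultimately show ?thesis
    using perfect_matching_with_few_escaping_edges[of "A - K" "B - K"] card_outside_balanced that
    by auto
qed

lemma near_perfect_matching_outside:
  obtains M where "M \<subseteq> E" "\<forall>e\<in>M. ends e \<subseteq> V - K - {b_end c1, a_end c2}"
    "\<forall>v\<in>V - K - {b_end c1, a_end c2}. deg M ends v = 1"
proof -
  define L R where "L = A - K - {a_end c2}" and "R = B - K - {b_end c1}"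
  have q1: "b_end c1 \<in> B - K" and q2: "a_end c2 \<in> A - K"
    using b_end_in_B[OF c1_in_E] a_end_in_A[OF c2_in_E] b_end_c1 a_end_c2 by auto
  have card_eq: "card L = card R"
    using card_outside_balanced q1 q2 finite_A finite_B by (simp add: L_def R_def)
  have escaping: "card {e\<in>E. a_end e \<in> S \<and> b_end e \<notin> R} \<le> 2" if S: "S \<subseteq> L" for S
  proof -
    have "{e\<in>E. a_end e \<in> S \<and> b_end e \<notin> R} \<subseteq> {e\<in>E. b_end c1 \<in> ends e} - {c1}"
    proof
      fix e assume e: "e \<in> {e\<in>E. a_end e \<in> S \<and> b_end e \<notin> R}"
      then have "e \<in> E" and a: "a_end e \<in> L" using S by auto
      have "e \<noteq> c1" "e \<noteq> c2" using a a_end_c1 by (auto simp: L_def)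
      then have "e \<notin> C" using C_eq by blast
      then have "b_end e \<notin> K" using edge_inside_iff[OF \<open>e \<in> E\<close>] a by (auto simp: L_def)
      then have "b_end e = b_end c1" using e b_end_in_B[OF \<open>e \<in> E\<close>] by (auto simp: R_def)
      then show "e \<in> {e\<in>E. b_end c1 \<in> ends e} - {c1}"
        using \<open>e \<in> E\<close> \<open>e \<noteq> c1\<close> ends_eq[OF \<open>e \<in> E\<close>] by simp
    qed
    then have "card {e\<in>E. a_end e \<in> S \<and> b_end e \<notin> R} \<le> card ({e\<in>E. b_end c1 \<in> ends e} - {c1})"
      using finite_E by (intro card_mono) simp_all
    also have "\<dots> = 2"
    proof -
      have "c1 \<in> {e\<in>E. b_end c1 \<in> ends e}" using c1_in_E ends_eq[OF c1_in_E] by simp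
      moreover have "card {e\<in>E. b_end c1 \<in> ends e} = 3"
        using deg_E[OF b_end_in_V[OF c1_in_E]] by (simp add: deg_def)
      ultimately show ?thesis by (simp add: card_Diff_singleton)
    qed
    finally show ?thesis .
  qed
  have "L \<subseteq> A" "R \<subseteq> B" by (auto simp: L_def R_def)
  then obtain M where M: "M \<subseteq> E" "\<forall>e\<in>M. ends e \<subseteq> L \<union> R" "\<forall>v\<in>L \<union> R. deg M ends v = 1"
    using perfect_matching_with_few_escaping_edges[of L R] card_eq escaping by blast
  moreover have "L \<union> R = V - K - {b_end c1, a_end c2}"
    using V_eq q1 q2 A_B_disjoint by (auto simp: L_def R_def)
  ultimately show ?thesis using that by simp
qed

lemma outside_completion:
  obtains M where "M \<subseteq> E" "\<forall>e\<in>M. ends e \<subseteq> V - K"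
    "\<forall>v\<in>V - K. deg (M \<union> (if m then C else {})) ends v = 1"
proof (cases m)
  case True
  obtain M where M: "M \<subseteq> E" "\<forall>e\<in>M. ends e \<subseteq> V - K - {b_end c1, a_end c2}"
    "\<forall>v\<in>V - K - {b_end c1, a_end c2}. deg M ends v = 1"
    by (rule near_perfect_matching_outside)
  have "deg (M \<union> C) ends v = 1" if v: "v \<in> V - K" for v
  proof -
    have "M \<inter> C = {}" using M(2) C_eq a_end_c1 b_end_c2 ends_eq[OF c1_in_E] ends_eq[OF c2_in_E] by auto
    then have "deg (M \<union> C) ends v = deg M ends v + card {c\<in>C. v \<in> ends c}"
      using deg_split_C[of "M \<union> C" v] M(1) C_subset by (simp add: Un_Diff Int_absorb1 Diff_triv)
    moreover have "deg M ends v = 0" if "v = b_end c1 \<or> v = a_end c2"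
    proof -
      have "{e\<in>M. v \<in> ends e} = {}" using that M(2) by blast
      then show ?thesis unfolding deg_def by (metis card.empty)
    qed
    ultimately show ?thesis using M(3) v card_C_at_outside[of v] by auto
  qed
  moreover have "\<forall>e\<in>M. ends e \<subseteq> V - K" using M(2) by blast
  ultimately show ?thesis using that M(1) True by simp
next
  case False
  then show ?thesis using that perfect_matching_outside by auto
qed

lemma ab_matching_extend:
  assumes a: "a \<in> K" and b: "b \<in> K"
    and F': "ab_matching K (mk_edges E ends C K) (mk_ends E ends C K) a b F'"
  shows "lam_matchable V E ends a b"
proof -
  define F0 where "F0 = {e. Some e \<in> F'}"
  define Cm where "Cm = (if None \<in> F' then C else {})"
  have F0: "F0 \<subseteq> E - C" "\<forall>e\<in>F0. ends e \<subseteq> K"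
    using F' by (auto simp: F0_def ab_matching_def mk_edges_def)
  obtain M where M: "M \<subseteq> E" "\<forall>e\<in>M. ends e \<subseteq> V - K" "\<forall>v\<in>V - K. deg (M \<union> Cm) ends v = 1"
    unfolding Cm_def by (rule outside_completion)
  define F where "F = F0 \<union> M \<union> Cm"
  have FE: "F \<subseteq> E" using F0 M(1) C_subset by (auto simp: F_def Cm_def)
  have "c1 \<notin> M" "c2 \<notin> M" using M(2) a_end_c1 b_end_c2 ends_eq[OF c1_in_E] ends_eq[OF c2_in_E] by auto
  then have c12: "c1 \<in> F \<longleftrightarrow> None \<in> F'" "c2 \<in> F \<longleftrightarrow> None \<in> F'"
    using F0(1) C_eq by (auto simp: F_def Cm_def)
  have "e \<notin> M" if "e \<in> E" "ends e \<subseteq> K" for e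
    using that M(2) ends_eq by fastforce
  then have inner: "{e\<in>F - C. ends e \<subseteq> K} = F0" using F0 FE by (auto simp: F_def Cm_def)
  have restriction: "marked_restriction F = F'"
  proof (rule set_eqI)
    fix x show "x \<in> marked_restriction F \<longleftrightarrow> x \<in> F'"
      using inner c12(1) by (cases x) (auto simp: marked_restriction_def F0_def)
  qed
  have inside: "deg F ends v = deg F' (mk_ends E ends C K) v" if "v \<in> K" for v
    using deg_marked_restriction[OF FE that] c12 restriction by simp
  have outside: "deg F ends v = 1" if "v \<in> V - K" for v
  proof -
    have "{e\<in>F. v \<in> ends e} = {e\<in>M \<union> Cm. v \<in> ends e}" using F0(2) that by (auto simp: F_def)
    then show ?thesis using M(3) that by (simp add: deg_def)
  qed
  have "ab_matching V E ends a b F"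
    unfolding ab_matching_def
  proof (intro conjI ballI)
    show "F \<subseteq> E" by (rule FE)
    show "deg F ends a = 3" "deg F ends b = 3" using inside a b F' by (simp_all add: ab_matching_def)
    fix v assume "v \<in> V - {a, b}"
    then show "deg F ends v = 1" using inside outside F' by (cases "v \<in> K") (auto simp: ab_matching_def)
  qed
  then show ?thesis by (auto simp: lam_matchable_def)
qed

lemma lam_matchable_iff:
  assumes "a \<in> A \<inter> K" "b \<in> B"
  shows "lam_matchable V E ends a b \<longleftrightarrow>
    b \<in> K \<and> lam_matchable K (mk_edges E ends C K) (mk_ends E ends C K) a b"
  using ab_matching_restrict[OF assms] ab_matching_extend assms by (auto simp: lam_matchable_def)

end

context cubic_bipartite_two_cut
begin

lemma two_cut_side_comp_of:
  assumes "v \<in> V"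
  obtains c1 c2 where "two_cut_side V E ends A B C (comp_of V E ends C v) c1 c2"
proof -
  have cut: "cut E ends (comp_of V E ends C v) = C" using cut_comp_of[OF assms] .
  obtain c1 c2 where "C = {c1, c2}" "c1 \<noteq> c2" "a_end c1 \<in> comp_of V E ends C v"
    "b_end c1 \<notin> comp_of V E ends C v" "a_end c2 \<notin> comp_of V E ends C v" "b_end c2 \<in> comp_of V E ends C v"
    using cut_eq_C_orientation[OF cut] by blast
  then have "two_cut_side V E ends A B C (comp_of V E ends C v) c1 c2"
    using cut comp_of_subset by unfold_locales
  then show ?thesis by (rule that)
qed

lemma lam_matchable_iff_comp_of:
  assumes a: "a \<in> A" and b: "b \<in> B"
  shows "lam_matchable V E ends a b \<longleftrightarrow>
    (b \<in> comp_of V E ends C a \<and>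
     lam_matchable (comp_of V E ends C a) (mk_edges E ends C (comp_of V E ends C a))
       (mk_ends E ends C (comp_of V E ends C a)) a b)"
proof -
  have "a \<in> V" using a V_eq by blast
  then obtain c1 c2 where side: "two_cut_side V E ends A B C (comp_of V E ends C a) c1 c2"
    by (rule two_cut_side_comp_of)
  show ?thesis using two_cut_side.lam_matchable_iff[OF side] mem_comp_of[OF \<open>a \<in> V\<close>] a b by blast
qed

lemma rho_split:
  assumes x: "x \<in> V" and y: "y \<in> V" and neq: "comp_of V E ends C x \<noteq> comp_of V E ends C y"
  defines "K1 \<equiv> comp_of V E ends C x" and "K2 \<equiv> comp_of V E ends C y"
  shows "rho V E ends A B =
    rho K1 (mk_edges E ends C K1) (mk_ends E ends C K1) (A \<inter> K1) (B \<inter> K1)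
    + rho K2 (mk_edges E ends C K2) (mk_ends E ends C K2) (A \<inter> K2) (B \<inter> K2)"
proof -
  define P where "P K = {(a, b). a \<in> A \<inter> K \<and> b \<in> B \<inter> K \<and>
    lam_matchable K (mk_edges E ends C K) (mk_ends E ends C K) a b}" for K
  have K2: "K2 = V - K1" using comp_of_complement[OF x y neq] by (simp add: K1_def K2_def)
  obtain c1 c2 d1 d2 where
    side1: "two_cut_side V E ends A B C K1 c1 c2" and side2: "two_cut_side V E ends A B C K2 d1 d2"
    using two_cut_side_comp_of x y unfolding K1_def K2_def by metis
  have "lam_matchable V E ends a b \<longleftrightarrow> (a, b) \<in> P K1 \<or> (a, b) \<in> P K2" if "a \<in> A" "b \<in> B" for a b
  proof (cases "a \<in> K1")
    case True
    then show ?thesis using two_cut_side.lam_matchable_iff[OF side1, of a b] that K2 by (auto simp: P_def)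
  next
    case False
    then have "a \<in> K2" using that K2 V_eq by blast
    then show ?thesis using two_cut_side.lam_matchable_iff[OF side2, of a b] that K2 by (auto simp: P_def)
  qed
  then have "{(a, b). a \<in> A \<and> b \<in> B \<and> lam_matchable V E ends a b} = P K1 \<union> P K2"
    by (auto simp: P_def)
  moreover have "finite (P K)" for K
    by (rule finite_subset[of _ "A \<times> B"]) (auto simp: P_def finite_A finite_B)
  moreover have "P K1 \<inter> P K2 = {}" using K2 by (auto simp: P_def)
  ultimately show ?thesis by (simp add: rho_def P_def card_Un_disjoint)
qed

end

theorem lemma2p3:
  fixes V :: "'v set" and E :: "'e set" and ends :: "'e \<Rightarrow> 'v set"
    and A B :: "'v set" and C :: "'e set"
  assumes "mgraph V E ends" and "connected_mg V E ends" and "cubic V E ends"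
    and "bipartite_AB V E ends A B"
    and "two_cut V E ends C"
  shows "(\<forall>a\<in>A. \<forall>b\<in>B. lam_matchable V E ends a b \<longleftrightarrow>
            (b \<in> comp_of V E ends C a \<and>
             lam_matchable (comp_of V E ends C a) (mk_edges E ends C (comp_of V E ends C a))
                (mk_ends E ends C (comp_of V E ends C a)) a b))
       \<and> (\<forall>x\<in>V. \<forall>y\<in>V. comp_of V E ends C x \<noteq> comp_of V E ends C y \<longrightarrow>
            (let K1 = comp_of V E ends C x; K2 = comp_of V E ends C y in
             rho V E ends A B =
               rho K1 (mk_edges E ends C K1) (mk_ends E ends C K1) (A \<inter> K1) (B \<inter> K1)
             + rho K2 (mk_edges E ends C K2) (mk_ends E ends C K2) (A \<inter> K2) (B \<inter> K2)))"
proof -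
  interpret cubic_bipartite_two_cut V E ends A B C
    using assms by unfold_locales
  show ?thesis using lam_matchable_iff_comp_of rho_split by (simp add: Let_def)
qed

end
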